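(* Let $f:\mathbb{R}^n\to\mathbb{R}$ be convex and differentiable with $\nabla f$ $L$-Lipschitz continuous, and assume its minimizer set $X^*$ is non-empty. Let $\{x^k\},\{z^k\},\{h_k\}$ be generated by Algorithm 3 with $0\le\beta\le1$, and set $d^k:=h_k\big(\nabla f(x^k)-\beta(\nabla f(x^k)-\nabla f(z^k))\big)$. Then for every $x^*\in X^*$ and every $k$, $$\langle x^k-x^*,d^k\rangle\ge(1-\beta)\Big(1-\frac{Lh_k}{4}\Big)\|x^k-z^k\|^2+\beta\langle x^k-z^k,h_k\nabla f(z^k)\rangle\ge\kappa_3\|x^k-z^k\|^2,$$ where $\kappa_3=(1-\beta)\big(1-\frac{Lh_k}{4}\big)+\beta(1-\nu)>0$.
   Context: $X^*=\{x:\nabla f(x)=0\}$ (the set of minimizers of the convex $f$). Algorithm 3: parameters $0<\mu<\nu<1$, $0<\underline{h}<1\le\gamma_0^0\le\overline{h}<\frac4L$, $0\le\beta\le1$, $\theta\in(0,1)$, $\tau>1$, $\eta\in(0,2)$, starting point $x^0$; run while $\nabla f(x^k)\neq0$. At iteration $k$: for $\gamma>0$ let $z^k(\gamma)=x^k-\gamma\nabla f(x^k)$ and $r_k(\gamma)=\gamma\|\nabla f(z^k(\gamma))-\nabla f(x^k)\|/\|z^k(\gamma)-x^k\|$; starting from $\gamma_0^k$, while $r_k(\gamma_l^k)>\nu$ set $\gamma_{l+1}^k=\gamma_l^k\theta\min\{1,1/r_k(\gamma_l^k)\}$; let $h_k$ be the first $\gamma_l^k$ with $r_k(\gamma_l^k)\le\nu$.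 Then $z^k=x^k-h_k\nabla f(x^k)$ and $x^{k+1}=x^k-\eta\alpha_kh_k\big(\nabla f(x^k)-\beta(\nabla f(x^k)-\nabla f(z^k))\big)$ with $$\alpha_k=\frac{(1-\beta)\left(1-\frac{Lh_k}{4}\right)\|x^k-z^k\|^2+\beta\langle x^k-z^k,h_k\nabla f(z^k)\rangle}{h_k^2\|\nabla f(x^k)-\beta(\nabla f(x^k)-\nabla f(z^k))\|^2};$$ finally $\gamma_0^{k+1}=\mathbf{P}_{[\underline{h},\overline{h}]}(\tau h_k)$ if $r_k(h_k)\le\mu$, else $\gamma_0^{k+1}=\mathbf{P}_{[\underline{h},\overline{h}]}(h_k)$, where $\mathbf{P}_{[a,b]}$ is projection onto $[a,b]$. *)

theory Defs
  imports "HOL-Analysis.Analysis"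
begin

definition alg3_r :: "(real^'n \<Rightarrow> real^'n) \<Rightarrow> real^'n \<Rightarrow> real \<Rightarrow> real" where
  "alg3_r g x \<gamma> =
     \<gamma> * norm (g (x - \<gamma> *\<^sub>R g x) - g x) / norm ((x - \<gamma> *\<^sub>R g x) - x)"

primrec alg3_bt :: "(real^'n \<Rightarrow> real^'n) \<Rightarrow> real^'n \<Rightarrow> real \<Rightarrow> real \<Rightarrow> real \<Rightarrow> nat \<Rightarrow> real" where
  "alg3_bt g x \<nu> \<theta> \<gamma>0 0 = \<gamma>0"
| "alg3_bt g x \<nu> \<theta> \<gamma>0 (Suc l) =
     (let \<gamma> = alg3_bt g x \<nu> \<theta> \<gamma>0 l in
      if alg3_r g x \<gamma> > \<nu> then \<gamma> * \<theta> * min 1 (1 / alg3_r g x \<gamma>) else \<gamma>)"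

definition proj_int :: "real \<Rightarrow> real \<Rightarrow> real \<Rightarrow> real" where
  "proj_int a b t = max a (min b t)"

definition alg3_step ::
  "(real^'n \<Rightarrow> real^'n) \<Rightarrow> real \<Rightarrow> real \<Rightarrow> real \<Rightarrow> real \<Rightarrow> real \<Rightarrow> real \<Rightarrow> real \<Rightarrow> real \<Rightarrow> real
   \<Rightarrow> real^'n \<Rightarrow> real \<Rightarrow> real \<Rightarrow> real^'n \<Rightarrow> real^'n \<Rightarrow> real \<Rightarrow> bool" where
  "alg3_step g L \<mu> \<nu> hl hu \<beta> \<theta> \<tau> \<eta> xk \<gamma>0k hk zk xk1 \<gamma>0k1 \<longleftrightarrow>
     (\<exists>l. hk = alg3_bt g xk \<nu> \<theta> \<gamma>0k l \<and> alg3_r g xk (alg3_bt g xk \<nu> \<theta> \<gamma>0k l) \<le> \<nu>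
          \<and> (\<forall>j<l. alg3_r g xk (alg3_bt g xk \<nu> \<theta> \<gamma>0k j) > \<nu>))
   \<and> zk = xk - hk *\<^sub>R g xk
   \<and> (let D = g xk - \<beta> *\<^sub>R (g xk - g zk);
          \<alpha> = ((1 - \<beta>) * (1 - L * hk / 4) * (norm (xk - zk))\<^sup>2
                 + \<beta> * inner (xk - zk) (hk *\<^sub>R g zk))
               / (hk\<^sup>2 * (norm D)\<^sup>2)
      in xk1 = xk - (\<eta> * \<alpha> * hk) *\<^sub>R D)
   \<and> \<gamma>0k1 = (if alg3_r g xk hk \<le> \<mu> then proj_int hl hu (\<tau> * hk) else proj_int hl hu hk)"

end

theory Submission
  imports Defs
begin

text \<open>Co-coercivity of the gradient gives \<open>\<langle>x\<^sup>k - x\<^sup>*, \<nabla>f(x\<^sup>k)\<rangle> \<ge> \<parallel>\<nabla>f(x\<^sup>k)\<parallel>\<^sup>2/L\<close>, and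
  \<open>h/L \<ge> h\<^sup>2(1 - Lh/4)\<close> because the difference is \<open>(1 - Lh/2)\<^sup>2 h/L\<close>; monotonicity of the
  gradient gives \<open>\<langle>z\<^sup>k - x\<^sup>*, \<nabla>f(z\<^sup>k)\<rangle> \<ge> 0\<close>. The convex combination of these two bounds is the
  first inequality. The acceptance test \<open>r\<^sub>k(h\<^sub>k) \<le> \<nu>\<close> of the backtracking says
  \<open>\<parallel>\<nabla>f(z\<^sup>k) - \<nabla>f(x\<^sup>k)\<parallel> \<le> \<nu>\<parallel>\<nabla>f(x\<^sup>k)\<parallel>\<close>, which by Cauchy-Schwarz yields the second one,
  and \<open>\<kappa>\<^sub>3 > 0\<close> because every step size stays below \<open>4/L\<close>.\<close>

lemma has_real_derivative_along_line:
  assumes "\<And>y. (F has_derivative (\<lambda>v. inner (G y) v)) (at y)"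
  shows "((\<lambda>t. F (y + t *\<^sub>R v)) has_real_derivative inner (G (y + t *\<^sub>R v)) v) (at t)"
proof -
  have "((\<lambda>t. y + t *\<^sub>R v) has_derivative (\<lambda>s. s *\<^sub>R v)) (at t)"
    by (auto intro!: derivative_eq_intros)
  from has_derivative_compose[OF this assms]
  have "((\<lambda>t. F (y + t *\<^sub>R v)) has_derivative (\<lambda>s. s * inner (G (y + t *\<^sub>R v)) v)) (at t)"
    by (simp add: o_def)
  moreover have "(\<lambda>s. s * inner (G (y + t *\<^sub>R v)) v) = (*) (inner (G (y + t *\<^sub>R v)) v)"
    by (simp add: fun_eq_iff)
  ultimately show ?thesis
    by (simp add: has_field_derivative_def)
qed

lemma convex_on_gradient_inequality:
  fixes f :: "'a::real_inner \<Rightarrow> real"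
  assumes conv: "convex_on UNIV f"
    and grad: "\<And>y. (f has_derivative (\<lambda>v. inner (g y) v)) (at y)"
  shows "f x + inner (g x) (y - x) \<le> f y"
proof -
  define \<phi> where "\<phi> = (\<lambda>t. f (x + t *\<^sub>R (y - x)))"
  have "convex_on UNIV \<phi>"
  proof (rule convex_onI)
    fix t a b :: real
    assume "0 < t" "t < 1"
    moreover have "x + ((1 - t) *\<^sub>R a + t *\<^sub>R b) *\<^sub>R (y - x)
        = (1 - t) *\<^sub>R (x + a *\<^sub>R (y - x)) + t *\<^sub>R (x + b *\<^sub>R (y - x))"
      by (simp add: algebra_simps)
    ultimately show "\<phi> ((1 - t) *\<^sub>R a + t *\<^sub>R b) \<le> (1 - t) * \<phi> a + t * \<phi> b"
      unfolding \<phi>_def using convex_onD[OF conv, of t] by simp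
  qed simp
  moreover have "(\<phi> has_real_derivative inner (g x) (y - x)) (at 0)"
    using has_real_derivative_along_line[OF grad, where y = x and t = 0 and v = "y - x"]
    by (simp add: \<phi>_def)
  ultimately have "inner (g x) (y - x) \<le> \<phi> 1 - \<phi> 0"
    using convex_on_imp_above_tangent[of UNIV \<phi> 0 1] by simp
  then show ?thesis
    by (simp add: \<phi>_def)
qed

lemma lipschitz_gradient_upper_bound:
  fixes F :: "'a::real_inner \<Rightarrow> real"
  assumes grad: "\<And>y. (F has_derivative (\<lambda>v. inner (G y) v)) (at y)"
    and Lip: "\<And>y w. norm (G y - G w) \<le> L * norm (y - w)"
    and "L \<ge> 0"
  shows "F (y + v) \<le> F y + inner (G y) v + L / 2 * (norm v)\<^sup>2"
proof -
  define \<psi> where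
    "\<psi> = (\<lambda>t. F (y + t *\<^sub>R v) - t * inner (G y) v - L / 2 * t\<^sup>2 * (norm v)\<^sup>2)"
  have "\<psi> 1 \<le> \<psi> 0"
  proof (rule DERIV_nonpos_imp_nonincreasing[of 0 1])
    fix t :: real
    assume t: "0 \<le> t" "t \<le> 1"
    let ?D = "inner (G (y + t *\<^sub>R v)) v - inner (G y) v - L / 2 * (2 * t) * (norm v)\<^sup>2"
    have "(\<psi> has_real_derivative ?D) (at t)"
      unfolding \<psi>_def
      by (rule derivative_eq_intros has_real_derivative_along_line[OF grad] | simp)+
    moreover have "?D \<le> 0"
    proof -
      have "inner (G (y + t *\<^sub>R v)) v - inner (G y) v = inner (G (y + t *\<^sub>R v) - G y) v"
        by (simp add: inner_diff_left)
      also have "\<dots> \<le> norm (G (y + t *\<^sub>R v) - G y) * norm v"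
        by (rule norm_cauchy_schwarz)
      also have "\<dots> \<le> L * norm (t *\<^sub>R v) * norm v"
        using Lip[of "y + t *\<^sub>R v" y] by (simp add: mult_right_mono)
      also have "\<dots> = L / 2 * (2 * t) * (norm v)\<^sup>2"
        using t by (simp add: power2_eq_square)
      finally show ?thesis by simp
    qed
    ultimately show "\<exists>D. (\<psi> has_real_derivative D) (at t) \<and> D \<le> 0"
      by blast
  qed simp
  then show ?thesis
    by (simp add: \<psi>_def)
qed

text \<open>The function \<open>u \<mapsto> f u - \<langle>g y, u\<rangle>\<close> is convex with \<open>L\<close>-Lipschitz gradient and minimal
  at \<open>y\<close>; compare its value at \<open>y\<close> with its descent bound along a gradient step from \<open>x\<close>.\<close>
lemma convex_lipschitz_gradient_gap:
  fixes f :: "'a::real_inner \<Rightarrow> real"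
  assumes conv: "convex_on UNIV f"
    and grad: "\<And>y. (f has_derivative (\<lambda>v. inner (g y) v)) (at y)"
    and Lip: "\<And>y w. norm (g y - g w) \<le> L * norm (y - w)"
    and L: "L > 0"
  shows "f y + inner (g y) (x - y) + (norm (g x - g y))\<^sup>2 / (2 * L) \<le> f x"
proof -
  define \<phi> where "\<phi> = (\<lambda>u. f u - inner (g y) u)"
  define e where "e = g x - g y"
  have conv_\<phi>: "convex_on UNIV \<phi>"
    unfolding \<phi>_def
    by (rule convex_onI) (use convex_onD[OF conv] in \<open>auto simp: inner_add_right algebra_simps\<close>)
  have grad_\<phi>: "\<And>u. (\<phi> has_derivative (\<lambda>v. inner (g u - g y) v)) (at u)"
    unfolding \<phi>_def inner_diff_left
    by (rule derivative_eq_intros grad | simp)+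
  have Lip_\<phi>: "\<And>u w. norm ((g u - g y) - (g w - g y)) \<le> L * norm (u - w)"
    using Lip by simp
  have "\<phi> y \<le> \<phi> (x + (- (1 / L)) *\<^sub>R e)"
    using convex_on_gradient_inequality[OF conv_\<phi> grad_\<phi>, of y] by simp
  also have "\<dots> \<le> \<phi> x + inner e ((- (1 / L)) *\<^sub>R e) + L / 2 * (norm ((- (1 / L)) *\<^sub>R e))\<^sup>2"
    by (rule lipschitz_gradient_upper_bound[OF grad_\<phi> Lip_\<phi>, of x, folded e_def]) (use L in simp)
  also have "\<dots> = \<phi> x - (norm e)\<^sup>2 / (2 * L)"
    using L by (simp add: power_mult_distrib dot_square_norm field_simps power2_eq_square)
  finally show ?thesis
    by (simp add: \<phi>_def e_def inner_diff_right)
qed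

lemma convex_lipschitz_gradient_cocoercive:
  fixes f :: "'a::real_inner \<Rightarrow> real"
  assumes conv: "convex_on UNIV f"
    and grad: "\<And>y. (f has_derivative (\<lambda>v. inner (g y) v)) (at y)"
    and Lip: "\<And>y w. norm (g y - g w) \<le> L * norm (y - w)"
    and L: "L > 0"
  shows "(norm (g x - g y))\<^sup>2 / L \<le> inner (x - y) (g x - g y)"
proof -
  have "f y + inner (g y) (x - y) + (norm (g x - g y))\<^sup>2 / (2 * L) \<le> f x"
    "f x + inner (g x) (y - x) + (norm (g y - g x))\<^sup>2 / (2 * L) \<le> f y"
    using convex_lipschitz_gradient_gap[OF conv grad Lip L] by blast+
  then show ?thesis
    by (simp add: norm_minus_commute inner_diff_left inner_diff_right inner_commute)
qed

lemma combined_direction_inner_lower_bound: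
  fixes x z xs gx gz :: "'a::real_inner"
  assumes step: "x - z = h *\<^sub>R gx"
    and coco: "(norm gx)\<^sup>2 / L \<le> inner (x - xs) gx"
    and mono: "0 \<le> inner (z - xs) gz"
    and "h > 0" "L > 0" "0 \<le> \<beta>" "\<beta> \<le> 1"
  shows "(1 - \<beta>) * (1 - L * h / 4) * (norm (x - z))\<^sup>2 + \<beta> * inner (x - z) (h *\<^sub>R gz)
    \<le> inner (x - xs) (h *\<^sub>R (gx - \<beta> *\<^sub>R (gx - gz)))"
proof -
  have "(1 - L * h / 4) * h \<le> 1 / L"
  proof -
    have "1 / L - (1 - L * h / 4) * h = (L * h / 2 - 1)\<^sup>2 / L"
      using \<open>L > 0\<close> by (simp add: field_simps power2_eq_square)
    moreover have "0 \<le> (L * h / 2 - 1)\<^sup>2 / L"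
      using \<open>L > 0\<close> by simp
    ultimately show ?thesis
      by linarith
  qed
  then have "((1 - L * h / 4) * h) * (h * (norm gx)\<^sup>2) \<le> 1 / L * (h * (norm gx)\<^sup>2)"
    using \<open>h > 0\<close> by (intro mult_right_mono) simp_all
  then have "(1 - L * h / 4) * (norm (x - z))\<^sup>2 \<le> h * ((norm gx)\<^sup>2 / L)"
    using \<open>h > 0\<close> by (simp add: step power_mult_distrib power2_eq_square mult_ac)
  also have "\<dots> \<le> h * inner (x - xs) gx"
    by (rule mult_left_mono[OF coco]) (use \<open>h > 0\<close> in simp)
  finally have part_gx:
      "(1 - \<beta>) * (1 - L * h / 4) * (norm (x - z))\<^sup>2 \<le> (1 - \<beta>) * (h * inner (x - xs) gx)"
    using \<open>\<beta> \<le> 1\<close> by (simp add: mult_left_mono mult.assoc)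
  have "inner (x - z) (h *\<^sub>R gz) \<le> h * inner (x - xs) gz"
    using mono \<open>h > 0\<close> by (simp add: inner_diff_left algebra_simps)
  then have part_gz: "\<beta> * inner (x - z) (h *\<^sub>R gz) \<le> \<beta> * (h * inner (x - xs) gz)"
    using \<open>0 \<le> \<beta>\<close> by (simp add: mult_left_mono)
  have "inner (x - xs) (h *\<^sub>R (gx - \<beta> *\<^sub>R (gx - gz)))
      = (1 - \<beta>) * (h * inner (x - xs) gx) + \<beta> * (h * inner (x - xs) gz)"
    by (simp add: inner_diff_right algebra_simps)
  with part_gx part_gz show ?thesis
    by linarith
qed

lemma gradient_step_inner_lower_bound:
  fixes x z gx gz :: "'a::real_inner"
  assumes step: "x - z = h *\<^sub>R gx"
    and close: "norm (gz - gx) \<le> \<nu> * norm gx"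
  shows "(1 - \<nu>) * (norm (x - z))\<^sup>2 \<le> inner (x - z) (h *\<^sub>R gz)"
proof -
  have "- (norm gx * norm (gz - gx)) \<le> inner gx (gz - gx)"
    using Cauchy_Schwarz_ineq2[of gx "gz - gx"] by linarith
  moreover have "norm gx * norm (gz - gx) \<le> norm gx * (\<nu> * norm gx)"
    using close by (simp add: mult_left_mono)
  ultimately have "(1 - \<nu>) * (norm gx)\<^sup>2 \<le> (norm gx)\<^sup>2 + inner gx (gz - gx)"
    by (simp add: power2_eq_square algebra_simps)
  then have "h\<^sup>2 * ((1 - \<nu>) * (norm gx)\<^sup>2) \<le> h\<^sup>2 * ((norm gx)\<^sup>2 + inner gx (gz - gx))"
    by (simp add: mult_left_mono)
  moreover have "(norm (x - z))\<^sup>2 = h\<^sup>2 * (norm gx)\<^sup>2"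
    by (simp add: step power_mult_distrib)
  moreover have "inner (x - z) (h *\<^sub>R gz) = h\<^sup>2 * ((norm gx)\<^sup>2 + inner gx (gz - gx))"
    by (simp add: step inner_diff_right dot_square_norm algebra_simps power2_eq_square)
  ultimately show ?thesis
    by (simp add: algebra_simps)
qed

lemma gradient_step_direction_bounds:
  fixes f :: "'a::real_inner \<Rightarrow> real"
  assumes conv: "convex_on UNIV f"
    and grad: "\<And>y. (f has_derivative (\<lambda>v. inner (g y) v)) (at y)"
    and Lip: "\<And>y w. norm (g y - g w) \<le> L * norm (y - w)"
    and L: "L > 0"
    and opt: "g xs = 0"
    and step: "x - z = h *\<^sub>R g x"
    and h: "0 < h" "L * h < 4"
    and close: "norm (g z - g x) \<le> \<nu> * norm (g x)" "\<nu> < 1"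
    and \<beta>: "0 \<le> \<beta>" "\<beta> \<le> 1"
  shows "(1 - \<beta>) * (1 - L * h / 4) * (norm (x - z))\<^sup>2 + \<beta> * inner (x - z) (h *\<^sub>R g z)
           \<le> inner (x - xs) (h *\<^sub>R (g x - \<beta> *\<^sub>R (g x - g z)))"
    and "((1 - \<beta>) * (1 - L * h / 4) + \<beta> * (1 - \<nu>)) * (norm (x - z))\<^sup>2
           \<le> (1 - \<beta>) * (1 - L * h / 4) * (norm (x - z))\<^sup>2 + \<beta> * inner (x - z) (h *\<^sub>R g z)"
    and "(1 - \<beta>) * (1 - L * h / 4) + \<beta> * (1 - \<nu>) > 0"
proof -
  have coco: "\<And>u. (norm (g u))\<^sup>2 / L \<le> inner (u - xs) (g u)"
    using convex_lipschitz_gradient_cocoercive[OF conv grad Lip L, of _ xs] opt by simp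
  have "0 \<le> (norm (g z))\<^sup>2 / L"
    using L by simp
  also note coco[of z]
  finally have "0 \<le> inner (z - xs) (g z)" .
  from combined_direction_inner_lower_bound[OF step coco this h(1) L \<beta>]
  show "(1 - \<beta>) * (1 - L * h / 4) * (norm (x - z))\<^sup>2 + \<beta> * inner (x - z) (h *\<^sub>R g z)
      \<le> inner (x - xs) (h *\<^sub>R (g x - \<beta> *\<^sub>R (g x - g z)))" .
  have "\<beta> * ((1 - \<nu>) * (norm (x - z))\<^sup>2) \<le> \<beta> * inner (x - z) (h *\<^sub>R g z)"
    using gradient_step_inner_lower_bound[OF step close(1)] \<beta> by (simp add: mult_left_mono)
  then show "((1 - \<beta>) * (1 - L * h / 4) + \<beta> * (1 - \<nu>)) * (norm (x - z))\<^sup>2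
      \<le> (1 - \<beta>) * (1 - L * h / 4) * (norm (x - z))\<^sup>2 + \<beta> * inner (x - z) (h *\<^sub>R g z)"
    by (simp add: distrib_right mult.assoc)
  have "0 \<le> (1 - \<beta>) * (1 - L * h / 4)" "0 \<le> \<beta> * (1 - \<nu>)"
    using \<beta> h close(2) by simp_all
  moreover have "0 < (1 - \<beta>) * (1 - L * h / 4) \<or> 0 < \<beta> * (1 - \<nu>)"
    using \<beta> h close(2) by (cases "\<beta> = 1") simp_all
  ultimately show "(1 - \<beta>) * (1 - L * h / 4) + \<beta> * (1 - \<nu>) > 0"
    by linarith
qed

lemma alg3_bt_pos_le:
  assumes "0 < \<gamma>0" "0 \<le> \<nu>" "0 < \<theta>" "\<theta> < 1"
  shows "0 < alg3_bt g x \<nu> \<theta> \<gamma>0 l \<and> alg3_bt g x \<nu> \<theta> \<gamma>0 l \<le> \<gamma>0"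
proof (induction l)
  case 0
  then show ?case using assms by simp
next
  case (Suc l)
  define \<gamma> where "\<gamma> = alg3_bt g x \<nu> \<theta> \<gamma>0 l"
  define r where "r = alg3_r g x \<gamma>"
  show ?case
  proof (cases "r > \<nu>")
    case True
    then have m: "0 < min 1 (1 / r)" "min 1 (1 / r) \<le> 1"
      using assms by auto
    have "0 < \<gamma> * \<theta> * min 1 (1 / r)"
      using Suc m assms by (simp add: \<gamma>_def)
    moreover have "\<gamma> * \<theta> * min 1 (1 / r) \<le> \<gamma> * 1 * 1"
      using Suc m assms by (intro mult_mono) (auto simp: \<gamma>_def)
    then have "\<gamma> * \<theta> * min 1 (1 / r) \<le> \<gamma>0"
      using Suc unfolding \<gamma>_def by linarith
    ultimately show ?thesis
      using True Suc by (simp add: \<gamma>_def r_def Let_def)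
  next
    case False
    then show ?thesis
      using Suc by (simp add: \<gamma>_def r_def Let_def)
  qed
qed

lemma alg3_step_stepsize_pos_le:
  assumes "alg3_step g L \<mu> \<nu> hl hu \<beta> \<theta> \<tau> \<eta> xk \<gamma>0k hk zk xk1 \<gamma>0k1"
    and "0 < \<gamma>0k" "0 \<le> \<nu>" "0 < \<theta>" "\<theta> < 1"
  shows "0 < hk \<and> hk \<le> \<gamma>0k"
  using assms alg3_bt_pos_le[of \<gamma>0k \<nu> \<theta> g xk] by (auto simp: alg3_step_def)

lemma alg3_step_next_initial_stepsize_bounds:
  assumes "alg3_step g L \<mu> \<nu> hl hu \<beta> \<theta> \<tau> \<eta> xk \<gamma>0k hk zk xk1 \<gamma>0k1" and "hl \<le> hu"
  shows "hl \<le> \<gamma>0k1 \<and> \<gamma>0k1 \<le> hu"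
  using assms by (auto simp: alg3_step_def proj_int_def)

lemma alg3_run_initial_stepsize_bounds:
  assumes gen: "\<And>k. (\<forall>j\<le>k. g (x j) \<noteq> 0) \<Longrightarrow>
      alg3_step g L \<mu> \<nu> hl hu \<beta> \<theta> \<tau> \<eta> (x k) (\<gamma>0 k) (h k) (z k) (x (Suc k)) (\<gamma>0 (Suc k))"
    and run: "\<forall>j\<le>k. g (x j) \<noteq> 0"
    and "0 < hl" "hl \<le> hu" "0 < \<gamma>0 0" "\<gamma>0 0 \<le> hu"
  shows "0 < \<gamma>0 k \<and> \<gamma>0 k \<le> hu"
proof (cases k)
  case 0
  then show ?thesis
    using assms by simp
next
  case (Suc j)
  with run have "\<forall>i\<le>j. g (x i) \<noteq> 0"
    by simp
  from alg3_step_next_initial_stepsize_bounds[OF gen[OF this] \<open>hl \<le> hu\<close>] show ?thesis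
    using Suc \<open>0 < hl\<close> by simp
qed

lemma alg3_r_le_imp_norm_gradient_change:
  assumes "alg3_r g x h \<le> \<nu>" "h > 0" "g x \<noteq> 0"
  shows "norm (g (x - h *\<^sub>R g x) - g x) \<le> \<nu> * norm (g x)"
proof -
  have "alg3_r g x h = norm (g (x - h *\<^sub>R g x) - g x) / norm (g x)"
    using assms(2) by (simp add: alg3_r_def)
  with assms show ?thesis
    by (simp add: divide_le_eq)
qed

theorem lemma6:
  fixes f :: "real^'n \<Rightarrow> real" and g :: "real^'n \<Rightarrow> real^'n"
    and L \<mu> \<nu> hl hu \<beta> \<theta> \<tau> \<eta> :: real
    and x z :: "nat \<Rightarrow> real^'n" and h \<gamma>0 :: "nat \<Rightarrow> real"
  assumes conv: "convex_on UNIV f"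
    and grad: "\<And>y. (f has_derivative (\<lambda>v. inner (g y) v)) (at y)"
    and Lpos: "L > 0"
    and Lip: "\<And>y w. norm (g y - g w) \<le> L * norm (y - w)"
    and Xne: "\<exists>xs. g xs = 0"
    and par_mu: "0 < \<mu>" "\<mu> < \<nu>" "\<nu> < 1"
    and par_h: "0 < hl" "hl < 1" "1 \<le> \<gamma>0 0" "\<gamma>0 0 \<le> hu" "hu < 4 / L"
    and par_beta: "0 \<le> \<beta>" "\<beta> \<le> 1"
    and par_theta: "0 < \<theta>" "\<theta> < 1"
    and par_tau: "\<tau> > 1"
    and par_eta: "0 < \<eta>" "\<eta> < 2"
    and gen: "\<And>k. (\<forall>j\<le>k. g (x j) \<noteq> 0) \<Longrightarrow>
               alg3_step g L \<mu> \<nu> hl hu \<beta> \<theta> \<tau> \<eta> (x k) (\<gamma>0 k) (h k) (z k) (x (Suc k)) (\<gamma>0 (Suc k))"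
    and run: "\<forall>j\<le>k. g (x j) \<noteq> 0"
    and opt: "g xs = 0"
  shows "inner (x k - xs) (h k *\<^sub>R (g (x k) - \<beta> *\<^sub>R (g (x k) - g (z k))))
           \<ge> (1 - \<beta>) * (1 - L * h k / 4) * (norm (x k - z k))\<^sup>2
              + \<beta> * inner (x k - z k) (h k *\<^sub>R g (z k))
       \<and> (1 - \<beta>) * (1 - L * h k / 4) * (norm (x k - z k))\<^sup>2
              + \<beta> * inner (x k - z k) (h k *\<^sub>R g (z k))
           \<ge> ((1 - \<beta>) * (1 - L * h k / 4) + \<beta> * (1 - \<nu>)) * (norm (x k - z k))\<^sup>2
       \<and> (1 - \<beta>) * (1 - L * h k / 4) + \<beta> * (1 - \<nu>) > 0"
proof -
  have step: "alg3_step g L \<mu> \<nu> hl hu \<beta> \<theta> \<tau> \<eta> (x k) (\<gamma>0 k) (h k) (z k) (x (Suc k)) (\<gamma>0 (Suc k))"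
    using gen[OF run] .
  have "0 < \<gamma>0 k \<and> \<gamma>0 k \<le> hu"
    using alg3_run_initial_stepsize_bounds[of g x, OF gen run] par_h by simp
  moreover from this have "0 < h k \<and> h k \<le> \<gamma>0 k"
    using par_mu par_theta by (intro alg3_step_stepsize_pos_le[OF step]) auto
  ultimately have "0 < h k" "h k \<le> hu"
    by auto
  moreover from this(2) have "L * h k \<le> L * hu"
    using Lpos by simp
  moreover have "L * hu < 4"
    using \<open>hu < 4 / L\<close> Lpos by (simp add: field_simps)
  ultimately have "0 < h k" "L * h k < 4"
    by auto
  moreover from step have accept: "alg3_r g (x k) (h k) \<le> \<nu>"
    and zk: "z k = x k - h k *\<^sub>R g (x k)"
    by (auto simp: alg3_step_def)
  moreover have "norm (g (z k) - g (x k)) \<le> \<nu> * norm (g (x k))"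
    using alg3_r_le_imp_norm_gradient_change[OF accept \<open>0 < h k\<close>] run zk by simp
  ultimately show ?thesis
    using gradient_step_direction_bounds[OF conv grad Lip Lpos opt, of "x k" "z k" "h k" \<nu> \<beta>]
      par_mu par_beta by simp
qed

end
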